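(* Let $G$ be a connected finite graph without a cut-vertex, let $\mathcal{L}$ be a degree-list assignment for $G$, and let $g$ be a partial proper $\mathcal{L}$-coloring of $G$. If $G$ has no proper $\mathcal{L}$-coloring $f$ with $|f^{-1}(\alpha)|\geq|g^{-1}(\alpha)|$ for all colors $\alpha$, then all the lists $\mathcal{L}(x)$, $x\in V(G)$, are equal.
   Context: A cut-vertex of a connected graph $G$ is a vertex $x$ with $G-x$ disconnected. A list assignment assigns to each vertex $x$ a set $\mathcal{L}(x)$; it is a degree-list assignment if $|\mathcal{L}(x)|\geq\deg_G(x)$ for all $x$. A (partial) $\mathcal{L}$-coloring is a function $f$ with domain $V(G)$ (resp. a subset of $V(G)$) and $f(x)\in\mathcal{L}(x)$; it is proper if adjacent vertices in its domain get different colors. *)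

theory Defs
  imports Main
begin

definition finite_graph :: "'a set \<Rightarrow> ('a \<Rightarrow> 'a \<Rightarrow> bool) \<Rightarrow> bool" where
  "finite_graph V E \<longleftrightarrow> finite V \<and> (\<forall>x y. E x y \<longrightarrow> x \<in> V \<and> y \<in> V) \<and>
     (\<forall>x y. E x y \<longrightarrow> E y x) \<and> (\<forall>x. \<not> E x x)"

definition joined_in :: "'a set \<Rightarrow> ('a \<Rightarrow> 'a \<Rightarrow> bool) \<Rightarrow> 'a \<Rightarrow> 'a \<Rightarrow> bool" where
  "joined_in W E u v \<longleftrightarrow> (\<lambda>a b. E a b \<and> a \<in> W \<and> b \<in> W)\<^sup>*\<^sup>* u v"

definition connected_graph :: "'a set \<Rightarrow> ('a \<Rightarrow> 'a \<Rightarrow> bool) \<Rightarrow> bool" where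
  "connected_graph V E \<longleftrightarrow> V \<noteq> {} \<and> (\<forall>u\<in>V. \<forall>v\<in>V. joined_in V E u v)"

definition cut_vertex :: "'a set \<Rightarrow> ('a \<Rightarrow> 'a \<Rightarrow> bool) \<Rightarrow> 'a \<Rightarrow> bool" where
  "cut_vertex V E x \<longleftrightarrow> x \<in> V \<and>
     (\<exists>u\<in>V - {x}. \<exists>v\<in>V - {x}. \<not> joined_in (V - {x}) E u v)"

definition degree :: "'a set \<Rightarrow> ('a \<Rightarrow> 'a \<Rightarrow> bool) \<Rightarrow> 'a \<Rightarrow> nat" where
  "degree V E x = card {y \<in> V. E x y}"

text \<open>|L x| \<ge> deg x; an infinite list trivially satisfies this.\<close>
definition degree_list_assignment ::
  "'a set \<Rightarrow> ('a \<Rightarrow> 'a \<Rightarrow> bool) \<Rightarrow> ('a \<Rightarrow> 'c set) \<Rightarrow> bool" where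
  "degree_list_assignment V E L \<longleftrightarrow>
     (\<forall>x\<in>V. finite (L x) \<longrightarrow> degree V E x \<le> card (L x))"

definition proper_L_coloring ::
  "'a set \<Rightarrow> ('a \<Rightarrow> 'a \<Rightarrow> bool) \<Rightarrow> ('a \<Rightarrow> 'c set) \<Rightarrow> ('a \<Rightarrow> 'c) \<Rightarrow> bool" where
  "proper_L_coloring V E L f \<longleftrightarrow>
     (\<forall>x\<in>V. f x \<in> L x) \<and> (\<forall>x\<in>V. \<forall>y\<in>V. E x y \<longrightarrow> f x \<noteq> f y)"

definition partial_proper_L_coloring ::
  "'a set \<Rightarrow> ('a \<Rightarrow> 'a \<Rightarrow> bool) \<Rightarrow> ('a \<Rightarrow> 'c set) \<Rightarrow> ('a \<Rightarrow> 'c option) \<Rightarrow> bool" where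
  "partial_proper_L_coloring V E L g \<longleftrightarrow> dom g \<subseteq> V \<and>
     (\<forall>x c. g x = Some c \<longrightarrow> c \<in> L x) \<and>
     (\<forall>x y c d. E x y \<longrightarrow> g x = Some c \<longrightarrow> g y = Some d \<longrightarrow> c \<noteq> d)"

end

theory Submission
  imports Defs "HOL-Combinatorics.Transposition"
begin

text \<open>
  Among the partial proper colorings that use every color at least as often as \<open>g\<close>, take one,
  \<open>h\<close>, with the largest domain; by hypothesis it leaves some vertex \<open>p\<close> uncolored.
  Maximality forces every color of \<open>L p\<close> onto a neighbor of \<open>p\<close>, and since
  \<open>|L p| \<ge> deg p\<close> the neighbors of \<open>p\<close> carry exactly the colors of \<open>L p\<close>, each once.
  Hence the hole can be moved to a neighbor \<open>q\<close> by giving \<open>p\<close> the color of \<open>q\<close>,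
  without losing maximumity, and so along any path.
  Given an edge \<open>p z\<close> and \<open>d \<in> L p\<close>, move the hole to the neighbor \<open>w\<close> colored \<open>d\<close>,
  so that \<open>p\<close> gets \<open>d\<close>; then move it to \<open>z\<close> along a path avoiding \<open>p\<close>, which exists
  as \<open>p\<close> is no cut-vertex. Now \<open>z\<close> is a hole next to the color \<open>d\<close>, so \<open>d \<in> L z\<close>.
\<close>

lemma joined_in_invariant:
  assumes "joined_in W E u v"
    and "\<And>x y. E x y \<Longrightarrow> x \<in> W \<Longrightarrow> y \<in> W \<Longrightarrow> f x = f y"
  shows "f u = f v"
  using assms(1) unfolding joined_in_def
  by (induction rule: rtranclp_induct) (auto dest: assms(2))

locale degree_list_coloring =
  fixes V :: "'a set" and E :: "'a \<Rightarrow> 'a \<Rightarrow> bool"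
    and L :: "'a \<Rightarrow> 'c set" and g :: "'a \<Rightarrow> 'c option"
  assumes graph: "finite_graph V E" and degree_list: "degree_list_assignment V E L"
begin

lemma finite_V: "finite V"
  using graph by (simp add: finite_graph_def)

lemma edge_in_V: "E x y \<Longrightarrow> x \<in> V \<and> y \<in> V"
  using graph by (simp add: finite_graph_def)

lemma edge_sym: "E x y \<Longrightarrow> E y x"
  using graph by (simp add: finite_graph_def)

lemma edge_irrefl: "\<not> E x x"
  using graph by (simp add: finite_graph_def)

lemma partial_proper_dom: "partial_proper_L_coloring V E L h \<Longrightarrow> dom h \<subseteq> V"
  by (simp add: partial_proper_L_coloring_def)

lemma partial_proper_in_list:
  "partial_proper_L_coloring V E L h \<Longrightarrow> h x = Some c \<Longrightarrow> c \<in> L x"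
  by (simp add: partial_proper_L_coloring_def)

lemma partial_proper_edge:
  "partial_proper_L_coloring V E L h \<Longrightarrow> E x y \<Longrightarrow> h x = Some c \<Longrightarrow> h y = Some d \<Longrightarrow> c \<noteq> d"
  unfolding partial_proper_L_coloring_def by blast

lemma partial_proper_extend:
  assumes "partial_proper_L_coloring V E L h" "p \<in> V" "c \<in> L p"
    and "\<nexists>y. E p y \<and> h y = Some c"
  shows "partial_proper_L_coloring V E L (h(p := Some c))"
  using assms edge_sym edge_irrefl
  unfolding partial_proper_L_coloring_def by auto

lemma comp_transpose_hole:
  assumes "h p = None"
  shows "h \<circ> transpose p q = h(p := h q, q := None)"
  using assms by (auto simp: fun_eq_iff transpose_def)

lemma partial_proper_move_color:
  assumes h: "partial_proper_L_coloring V E L h" and "h p = None" "E p q" "h q = Some c"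
    and "c \<in> L p" and unique: "\<And>y. E p y \<Longrightarrow> h y = Some c \<Longrightarrow> y = q"
  shows "partial_proper_L_coloring V E L (h(p := h q, q := None))"
  unfolding partial_proper_L_coloring_def
proof (intro conjI allI impI)
  show "dom (h(p := h q, q := None)) \<subseteq> V"
    using partial_proper_dom[OF h] assms(3) edge_in_V by auto
  show "d \<in> L x" if "(h(p := h q, q := None)) x = Some d" for x d
    using that assms(4,5) partial_proper_in_list[OF h] by (auto split: if_splits)
  show "d \<noteq> d'" if e: "E x y" and "(h(p := h q, q := None)) x = Some d"
    and "(h(p := h q, q := None)) y = Some d'" for x y d d'
    using that assms(4) partial_proper_edge[OF h e] unique edge_sym[OF e] edge_irrefl
    by (auto split: if_splits)
qed

lemma card_Collect_comp_transpose:
  assumes "p \<in> V" "q \<in> V"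
  shows "card {x \<in> V. P ((h \<circ> transpose p q) x)} = card {x \<in> V. P (h x)}"
proof -
  have "{x \<in> V. P ((h \<circ> transpose p q) x)} = transpose p q ` {x \<in> V. P (h x)}"
    using assms by (auto simp: in_transpose_image_iff transpose_def)
  then show ?thesis
    by (simp add: card_image)
qed

definition admissible :: "('a \<Rightarrow> 'c option) \<Rightarrow> bool" where
  "admissible h \<longleftrightarrow> partial_proper_L_coloring V E L h \<and>
     (\<forall>\<alpha>. card {x \<in> V. g x = Some \<alpha>} \<le> card {x \<in> V. h x = Some \<alpha>})"

definition maximum :: "('a \<Rightarrow> 'c option) \<Rightarrow> bool" where
  "maximum h \<longleftrightarrow> admissible h \<and> (\<forall>h'. admissible h' \<longrightarrow> card (dom h') \<le> card (dom h))"

lemma maximum_exists: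
  assumes "partial_proper_L_coloring V E L g"
  obtains h where "maximum h"
proof -
  have "admissible g"
    using assms by (simp add: admissible_def)
  moreover have "card (dom h) < Suc (card V)" if "admissible h" for h
    using that partial_proper_dom finite_V
    by (simp add: admissible_def card_mono less_Suc_eq_le)
  ultimately show thesis
    using ex_has_greatest_nat[of admissible g "\<lambda>h. card (dom h)"] that
    unfolding maximum_def by blast
qed

lemma maximum_has_hole:
  assumes "maximum h"
    and "\<nexists>f. proper_L_coloring V E L f \<and>
              (\<forall>\<alpha>. card {x \<in> V. g x = Some \<alpha>} \<le> card {x \<in> V. f x = \<alpha>})"
  obtains u where "u \<in> V" "h u = None"
proof (rule ccontr)
  assume "\<not> thesis"
  with that have total: "\<forall>x\<in>V. h x \<noteq> None"
    by blast
  have h: "partial_proper_L_coloring V E L h"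
    using assms(1) by (simp add: maximum_def admissible_def)
  have "proper_L_coloring V E L (the \<circ> h)"
    using total partial_proper_in_list[OF h] partial_proper_edge[OF h]
    unfolding proper_L_coloring_def by force
  moreover have "{x \<in> V. (the \<circ> h) x = \<alpha>} = {x \<in> V. h x = Some \<alpha>}" for \<alpha>
    using total by force
  then have "card {x \<in> V. g x = Some \<alpha>} \<le> card {x \<in> V. (the \<circ> h) x = \<alpha>}" for \<alpha>
    using assms(1) by (simp add: maximum_def admissible_def)
  ultimately show False
    using assms(2) by blast
qed

lemma maximum_hole_color_on_neighbor:
  assumes "maximum h" "p \<in> V" "h p = None" "c \<in> L p"
  obtains y where "E p y" "h y = Some c"
proof (rule ccontr)
  assume "\<not> thesis"
  with that have free: "\<nexists>y. E p y \<and> h y = Some c"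
    by blast
  have "admissible h"
    using assms(1) by (simp add: maximum_def)
  have "card {x \<in> V. h x = Some \<alpha>} \<le> card {x \<in> V. (h(p := Some c)) x = Some \<alpha>}" for \<alpha>
    using assms(3) finite_V by (intro card_mono) auto
  then have "card {x \<in> V. g x = Some \<alpha>} \<le> card {x \<in> V. (h(p := Some c)) x = Some \<alpha>}" for \<alpha>
    using \<open>admissible h\<close> unfolding admissible_def by (meson order_trans)
  moreover have "partial_proper_L_coloring V E L (h(p := Some c))"
    using \<open>admissible h\<close> partial_proper_extend[OF _ assms(2,4) free]
    unfolding admissible_def by blast
  ultimately have "admissible (h(p := Some c))"
    unfolding admissible_def by blast
  then have "card (dom (h(p := Some c))) \<le> card (dom h)"
    using assms(1) unfolding maximum_def by blast
  moreover have "finite (dom h)"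
    using \<open>admissible h\<close> partial_proper_dom finite_V
    unfolding admissible_def by (meson finite_subset)
  then have "card (dom (h(p := Some c))) = Suc (card (dom h))"
    using assms(3) by (simp add: domIff)
  ultimately show False
    by simp
qed

lemma maximum_hole_neighbor_colors:
  assumes "maximum h" "p \<in> V" "h p = None"
  shows "Some ` L p = h ` {y \<in> V. E p y}" "inj_on h {y \<in> V. E p y}"
proof -
  let ?N = "{y \<in> V. E p y}"
  have finite_N: "finite ?N"
    using finite_V by simp
  have covered: "Some ` L p \<subseteq> h ` ?N"
  proof
    fix z assume "z \<in> Some ` L p"
    then obtain c where "c \<in> L p" "z = Some c"
      by blast
    then show "z \<in> h ` ?N"
      using maximum_hole_color_on_neighbor[OF assms] edge_in_V by (metis (lifting) image_eqI mem_Collect_eq)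
  qed
  then have "finite (L p)"
    using finite_N by (metis finite_imageD finite_imageI finite_subset inj_Some)
  then have "card ?N \<le> card (Some ` L p)"
    using degree_list assms(2)
    by (simp add: degree_list_assignment_def degree_def card_image)
  moreover have "card (h ` ?N) \<le> card ?N"
    by (rule card_image_le[OF finite_N])
  ultimately show "Some ` L p = h ` ?N"
    using covered finite_N by (intro card_seteq) auto
  then show "inj_on h ?N"
    using \<open>card ?N \<le> card (Some ` L p)\<close> \<open>card (h ` ?N) \<le> card ?N\<close> finite_N
    by (intro eq_card_imp_inj_on) auto
qed

lemma maximum_hole_neighbor_color_in_list:
  assumes "maximum h" "p \<in> V" "h p = None" "E p y" "h y = Some c"
  shows "c \<in> L p"
  using maximum_hole_neighbor_colors(1)[OF assms(1-3)] assms(4,5) edge_in_V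
  by (metis (mono_tags, lifting) image_iff mem_Collect_eq option.inject)

lemma maximum_move_hole:
  assumes "maximum h" "p \<in> V" "h p = None" "E p q"
  shows "maximum (h \<circ> transpose p q)"
proof -
  have h: "admissible h"
    using assms(1) by (simp add: maximum_def)
  have "q \<in> V"
    using assms(4) edge_in_V by blast
  obtain c where c: "h q = Some c"
    using maximum_hole_neighbor_colors(1)[OF assms(1-3)] assms(4) \<open>q \<in> V\<close> by blast
  have "partial_proper_L_coloring V E L (h \<circ> transpose p q)"
    unfolding comp_transpose_hole[of h p q, OF assms(3)]
  proof (rule partial_proper_move_color[OF _ assms(3,4) c])
    show "partial_proper_L_coloring V E L h"
      using h by (simp add: admissible_def)
    show "c \<in> L p"
      by (rule maximum_hole_neighbor_color_in_list[OF assms c])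
    show "y = q" if "E p y" "h y = Some c" for y
      using maximum_hole_neighbor_colors(2)[OF assms(1-3)] that assms(4) c edge_in_V
      by (auto simp: inj_on_def)
  qed
  moreover have "dom (h \<circ> transpose p q) = transpose p q ` dom h"
    by (auto simp: in_transpose_image_iff)
  moreover have "card {x \<in> V. (h \<circ> transpose p q) x = Some \<alpha>} = card {x \<in> V. h x = Some \<alpha>}" for \<alpha>
    using card_Collect_comp_transpose[OF assms(2) \<open>q \<in> V\<close>, of "\<lambda>c. c = Some \<alpha>"] by simp
  ultimately show ?thesis
    using assms(1) by (simp add: maximum_def admissible_def card_image)
qed

lemma maximum_move_hole_along_path:
  assumes "maximum h" "h p = None" "W \<subseteq> V" "joined_in W E p x"
  obtains h' where "maximum h'" "h' x = None" "\<forall>v. v \<notin> W \<longrightarrow> h' v = h v"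
  using assms(4) unfolding joined_in_def
proof (induction arbitrary: thesis rule: rtranclp_induct)
  case base
  then show ?case
    using assms by blast
next
  case (step y z)
  then obtain h' where h': "maximum h'" "h' y = None" "\<forall>v. v \<notin> W \<longrightarrow> h' v = h v"
    by blast
  have "E y z" "y \<in> V"
    using step.hyps(2) assms(3) by auto
  then have "maximum (h' \<circ> transpose y z)"
    using maximum_move_hole h' by blast
  moreover have "(h' \<circ> transpose y z) z = None"
    using h'(2) by simp
  moreover have "\<forall>v. v \<notin> W \<longrightarrow> (h' \<circ> transpose y z) v = h v"
    using h'(3) step.hyps(2) by (auto simp: transpose_def)
  ultimately show ?case
    by (rule step.prems)
qed

lemma maximum_hole_list_subset_neighbor:
  assumes "maximum h" "p \<in> V" "h p = None" "E p z" "\<not> cut_vertex V E p"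
  shows "L p \<subseteq> L z"
proof
  fix d assume "d \<in> L p"
  then obtain w where w: "E p w" "h w = Some d"
    using maximum_hole_color_on_neighbor[OF assms(1-3)] by blast
  let ?h = "h \<circ> transpose p w"
  have "w \<in> V - {p}" "z \<in> V - {p}"
    using w(1) assms(4) edge_in_V edge_irrefl by blast+
  then have "joined_in (V - {p}) E w z"
    using assms(2,5) by (auto simp: cut_vertex_def)
  moreover have "?h w = None"
    using assms(3) by simp
  ultimately obtain h' where h': "maximum h'" "h' z = None" "\<forall>v. v \<notin> V - {p} \<longrightarrow> h' v = ?h v"
    using maximum_move_hole_along_path[OF maximum_move_hole[OF assms(1-3) w(1)]] Diff_subset
    by metis
  then have "h' p = Some d"
    using w(2) by simp
  then show "d \<in> L z"
    using maximum_hole_neighbor_color_in_list[OF h'(1) _ h'(2)] edge_sym[OF assms(4)]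
      \<open>z \<in> V - {p}\<close> by blast
qed

end

theorem lemma4p3:
  fixes V :: "'a set" and E :: "'a \<Rightarrow> 'a \<Rightarrow> bool"
    and L :: "'a \<Rightarrow> 'c set" and g :: "'a \<Rightarrow> 'c option"
  assumes "finite_graph V E"
    and "connected_graph V E"
    and "\<forall>x. \<not> cut_vertex V E x"
    and "degree_list_assignment V E L"
    and "partial_proper_L_coloring V E L g"
    and "\<not> (\<exists>f. proper_L_coloring V E L f \<and>
              (\<forall>\<alpha>. card {x \<in> V. g x = Some \<alpha>} \<le> card {x \<in> V. f x = \<alpha>}))"
  shows "\<forall>x\<in>V. \<forall>y\<in>V. L x = L y"
proof -
  interpret degree_list_coloring V E L g
    using assms(1,4) by unfold_locales
  obtain h where h: "maximum h"
    using maximum_exists[OF assms(5)] .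
  obtain u where u: "u \<in> V" "h u = None"
    using maximum_has_hole[OF h assms(6)] .
  have subset: "L x \<subseteq> L y" if "E x y" for x y
  proof -
    have "x \<in> V"
      using that edge_in_V by blast
    then have "joined_in V E u x"
      using assms(2) u(1) by (simp add: connected_graph_def)
    then obtain h' where "maximum h'" "h' x = None"
      using maximum_move_hole_along_path[OF h u(2) order_refl] by blast
    then show ?thesis
      using maximum_hole_list_subset_neighbor \<open>x \<in> V\<close> that assms(3) by blast
  qed
  have edge: "L x = L y" if "E x y" for x y
    using subset[OF that] subset[OF edge_sym[OF that]] by blast
  show ?thesis
  proof (intro ballI)
    fix x y assume "x \<in> V" "y \<in> V"
    then have "joined_in V E x y"
      using assms(2) by (simp add: connected_graph_def)
    then show "L x = L y"
      by (rule joined_in_invariant) (rule edge)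
  qed
qed

end
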